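(* Let $\mathcal{D}$ be a category containing all finite connected colimits. Then $\mathrm{Tw}(\mathcal{D})$ has all pushouts.
   Context: For a category $\mathcal{D}$, the Grothendieck twist $\mathrm{Tw}(\mathcal{D})$ is the category whose objects are finite families $\{a_i\}_{i\in I}$ ($I$ a finite set, each $a_i$ an object of $\mathcal{D}$), and whose morphisms $\{a_i\}_{i\in I}\to\{b_j\}_{j\in J}$ are pairs consisting of a function $f:I\to J$ and morphisms $F_i:a_i\to b_{f(i)}$ in $\mathcal{D}$ for all $i\in I$; composition composes set maps and components. *)

theory Defs
  imports "HOL-Library.FuncSet"
begin

record ('o, 'a) cat =
  Obj :: "'o set"
  Arr :: "'a set"
  Dom :: "'a \<Rightarrow> 'o"
  Cod :: "'a \<Rightarrow> 'o"
  Id  :: "'o \<Rightarrow> 'a"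
  Comp :: "'a \<Rightarrow> 'a \<Rightarrow> 'a"   (* Comp C g f = g \<circ> f *)

definition category :: "('o, 'a, 'm) cat_scheme \<Rightarrow> bool" where
  "category C \<longleftrightarrow>
     (\<forall>f\<in>Arr C. Dom C f \<in> Obj C \<and> Cod C f \<in> Obj C) \<and>
     (\<forall>x\<in>Obj C. Id C x \<in> Arr C \<and> Dom C (Id C x) = x \<and> Cod C (Id C x) = x) \<and>
     (\<forall>f\<in>Arr C. \<forall>g\<in>Arr C. Cod C f = Dom C g \<longrightarrow>
        Comp C g f \<in> Arr C \<and> Dom C (Comp C g f) = Dom C f \<and> Cod C (Comp C g f) = Cod C g) \<and>
     (\<forall>f\<in>Arr C. Comp C f (Id C (Dom C f)) = f \<and> Comp C (Id C (Cod C f)) f = f) \<and>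
     (\<forall>f\<in>Arr C. \<forall>g\<in>Arr C. \<forall>h\<in>Arr C. Cod C f = Dom C g \<longrightarrow> Cod C g = Dom C h \<longrightarrow>
        Comp C h (Comp C g f) = Comp C (Comp C h g) f)"

definition is_functor :: "('p, 'b, 'n) cat_scheme \<Rightarrow> ('o, 'a, 'm) cat_scheme \<Rightarrow>
    ('p \<Rightarrow> 'o) \<Rightarrow> ('b \<Rightarrow> 'a) \<Rightarrow> bool" where
  "is_functor J C Fo Fa \<longleftrightarrow>
     (\<forall>j\<in>Obj J. Fo j \<in> Obj C) \<and>
     (\<forall>u\<in>Arr J. Fa u \<in> Arr C \<and> Dom C (Fa u) = Fo (Dom J u) \<and> Cod C (Fa u) = Fo (Cod J u)) \<and>
     (\<forall>j\<in>Obj J. Fa (Id J j) = Id C (Fo j)) \<and>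
     (\<forall>u\<in>Arr J. \<forall>v\<in>Arr J. Cod J u = Dom J v \<longrightarrow> Fa (Comp J v u) = Comp C (Fa v) (Fa u))"

definition connected_cat :: "('p, 'b, 'n) cat_scheme \<Rightarrow> bool" where
  "connected_cat J \<longleftrightarrow> Obj J \<noteq> {} \<and>
     (\<forall>x\<in>Obj J. \<forall>y\<in>Obj J.
        (x, y) \<in> ({(Dom J u, Cod J u) | u. u \<in> Arr J} \<union> {(Cod J u, Dom J u) | u. u \<in> Arr J})\<^sup>*)"

definition finite_cat :: "('p, 'b, 'n) cat_scheme \<Rightarrow> bool" where
  "finite_cat J \<longleftrightarrow> finite (Obj J) \<and> finite (Arr J)"

definition cocone :: "('p, 'b, 'n) cat_scheme \<Rightarrow> ('o, 'a, 'm) cat_scheme \<Rightarrow>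
    ('p \<Rightarrow> 'o) \<Rightarrow> ('b \<Rightarrow> 'a) \<Rightarrow> 'o \<Rightarrow> ('p \<Rightarrow> 'a) \<Rightarrow> bool" where
  "cocone J C Fo Fa c l \<longleftrightarrow> c \<in> Obj C \<and>
     (\<forall>j\<in>Obj J. l j \<in> Arr C \<and> Dom C (l j) = Fo j \<and> Cod C (l j) = c) \<and>
     (\<forall>u\<in>Arr J. Comp C (l (Cod J u)) (Fa u) = l (Dom J u))"

definition colimit :: "('p, 'b, 'n) cat_scheme \<Rightarrow> ('o, 'a, 'm) cat_scheme \<Rightarrow>
    ('p \<Rightarrow> 'o) \<Rightarrow> ('b \<Rightarrow> 'a) \<Rightarrow> 'o \<Rightarrow> ('p \<Rightarrow> 'a) \<Rightarrow> bool" where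
  "colimit J C Fo Fa c l \<longleftrightarrow> cocone J C Fo Fa c l \<and>
     (\<forall>c' l'. cocone J C Fo Fa c' l' \<longrightarrow>
        (\<exists>!h. h \<in> Arr C \<and> Dom C h = c \<and> Cod C h = c' \<and> (\<forall>j\<in>Obj J. Comp C h (l j) = l' j)))"

text \<open>Every finite category is isomorphic to one whose objects and arrows are natural
  numbers, so index categories are taken with carrier type nat.\<close>
definition has_finite_connected_colimits :: "('o, 'a, 'm) cat_scheme \<Rightarrow> bool" where
  "has_finite_connected_colimits C \<longleftrightarrow>
     (\<forall>(J :: (nat, nat) cat) Fo Fa. category J \<and> finite_cat J \<and> connected_cat J \<and>
        is_functor J C Fo Fa \<longrightarrow> (\<exists>c l. colimit J C Fo Fa c l))"

definition has_pushouts :: "('o, 'a, 'm) cat_scheme \<Rightarrow> bool" where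
  "has_pushouts C \<longleftrightarrow>
     (\<forall>f\<in>Arr C. \<forall>g\<in>Arr C. Dom C f = Dom C g \<longrightarrow>
       (\<exists>p q. p \<in> Arr C \<and> q \<in> Arr C \<and> Dom C p = Cod C f \<and> Dom C q = Cod C g \<and>
          Cod C p = Cod C q \<and> Comp C p f = Comp C q g \<and>
          (\<forall>p' q'. p' \<in> Arr C \<and> q' \<in> Arr C \<and> Dom C p' = Cod C f \<and> Dom C q' = Cod C g \<and>
              Cod C p' = Cod C q' \<and> Comp C p' f = Comp C q' g \<longrightarrow>
             (\<exists>!h. h \<in> Arr C \<and> Dom C h = Cod C p \<and> Cod C h = Cod C p' \<and>
                    Comp C h p = p' \<and> Comp C h q = q'))))"

text \<open>Objects: finite families (I, a) with I a finite set of indices (taken inside nat) and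
  a : I \<rightarrow> Obj D (extensional). Morphisms (X, Y, f, F) with f : I \<rightarrow> J and
  F i : a i \<rightarrow> b (f i).\<close>

type_synonym 'o tw_obj = "nat set \<times> (nat \<Rightarrow> 'o)"
type_synonym ('o, 'a) tw_arr = "'o tw_obj \<times> 'o tw_obj \<times> (nat \<Rightarrow> nat) \<times> (nat \<Rightarrow> 'a)"

definition tw_objs :: "('o, 'a, 'm) cat_scheme \<Rightarrow> 'o tw_obj set" where
  "tw_objs D = {(I, a). finite I \<and> a \<in> extensional I \<and> (\<forall>i\<in>I. a i \<in> Obj D)}"

definition tw_arrs :: "('o, 'a, 'm) cat_scheme \<Rightarrow> ('o, 'a) tw_arr set" where
  "tw_arrs D = {(X, Y, f, F). X \<in> tw_objs D \<and> Y \<in> tw_objs D \<and>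
      f \<in> extensional (fst X) \<and> F \<in> extensional (fst X) \<and>
      (\<forall>i\<in>fst X. f i \<in> fst Y \<and> F i \<in> Arr D \<and> Dom D (F i) = snd X i \<and>
                   Cod D (F i) = snd Y (f i))}"

definition Tw :: "('o, 'a, 'm) cat_scheme \<Rightarrow> ('o tw_obj, ('o, 'a) tw_arr) cat" where
  "Tw D = \<lparr> Obj = tw_objs D,
            Arr = tw_arrs D,
            Dom = (\<lambda>(X, Y, f, F). X),
            Cod = (\<lambda>(X, Y, f, F). Y),
            Id = (\<lambda>X. (X, X, (\<lambda>i\<in>fst X. i), (\<lambda>i\<in>fst X. Id D (snd X i)))),
            Comp = (\<lambda>(Y, Z, g, G) (X, Y', f, F).
                      (X, Z, (\<lambda>i\<in>fst X. g (f i)), (\<lambda>i\<in>fst X. Comp D (G (f i)) (F i)))) \<rparr>"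

end

theory Submission
  imports Defs
begin

text \<open>A morphism of \<open>Tw(D)\<close> is a map of index sets together with arrows of \<open>D\<close>, so the
  pushout of \<open>(\<phi>, F) : (I, a) \<rightarrow> (J, b)\<close> and \<open>(\<psi>, G) : (I, a) \<rightarrow> (K, c)\<close> is built in two
  layers. Its index set is the pushout of finite sets: the quotient \<open>P\<close> of \<open>J \<squnion> K\<close> by the
  equivalence relation generated by \<open>\<phi> i \<sim> \<psi> i\<close>. Over each class lies a finite connected
  diagram in \<open>D\<close> (the objects \<open>b j\<close>, \<open>c k\<close> of the class, the objects \<open>a i\<close> over it and the
  arrows \<open>F i\<close>, \<open>G i\<close>), and the pushout object at that class is its colimit. Any other
  commuting square induces a cocone on each class diagram, its index map being constant on
  classes; the mediating morphism is assembled from the mediators of these colimits, and it is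
  unique because every \<open>a i\<close> factors through \<open>b (\<phi> i)\<close>.\<close>

lemma category_comp:
  "category C \<Longrightarrow> f \<in> Arr C \<Longrightarrow> g \<in> Arr C \<Longrightarrow> Cod C f = Dom C g \<Longrightarrow>
     Comp C g f \<in> Arr C \<and> Dom C (Comp C g f) = Dom C f \<and> Cod C (Comp C g f) = Cod C g"
  unfolding category_def by blast

lemma category_id:
  "category C \<Longrightarrow> x \<in> Obj C \<Longrightarrow> Id C x \<in> Arr C \<and> Dom C (Id C x) = x \<and> Cod C (Id C x) = x"
  unfolding category_def by blast

lemma category_comp_id_right: "category C \<Longrightarrow> f \<in> Arr C \<Longrightarrow> Comp C f (Id C (Dom C f)) = f"
  unfolding category_def by blast

lemma category_comp_id_left: "category C \<Longrightarrow> f \<in> Arr C \<Longrightarrow> Comp C (Id C (Cod C f)) f = f"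
  unfolding category_def by blast

lemma category_comp_assoc:
  "category C \<Longrightarrow> f \<in> Arr C \<Longrightarrow> g \<in> Arr C \<Longrightarrow> h \<in> Arr C \<Longrightarrow>
     Cod C f = Dom C g \<Longrightarrow> Cod C g = Dom C h \<Longrightarrow> Comp C h (Comp C g f) = Comp C (Comp C h g) f"
  unfolding category_def by blast

definition commuting_square :: "('o, 'a, 'm) cat_scheme \<Rightarrow> 'a \<Rightarrow> 'a \<Rightarrow> 'a \<Rightarrow> 'a \<Rightarrow> bool" where
  "commuting_square C f g p q \<longleftrightarrow> p \<in> Arr C \<and> q \<in> Arr C \<and>
     Dom C p = Cod C f \<and> Dom C q = Cod C g \<and> Cod C p = Cod C q \<and> Comp C p f = Comp C q g"

definition is_pushout :: "('o, 'a, 'm) cat_scheme \<Rightarrow> 'a \<Rightarrow> 'a \<Rightarrow> 'a \<Rightarrow> 'a \<Rightarrow> bool" where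
  "is_pushout C f g p q \<longleftrightarrow> commuting_square C f g p q \<and>
     (\<forall>p' q'. commuting_square C f g p' q' \<longrightarrow>
        (\<exists>!h. h \<in> Arr C \<and> Dom C h = Cod C p \<and> Cod C h = Cod C p' \<and>
              Comp C h p = p' \<and> Comp C h q = q'))"

lemma has_pushouts_iff:
  "has_pushouts C \<longleftrightarrow>
     (\<forall>f\<in>Arr C. \<forall>g\<in>Arr C. Dom C f = Dom C g \<longrightarrow> (\<exists>p q. is_pushout C f g p q))"
  unfolding has_pushouts_def is_pushout_def commuting_square_def by (simp only: conj_assoc)

definition colimit_mediator :: "('p, 'b, 'n) cat_scheme \<Rightarrow> ('o, 'a, 'm) cat_scheme \<Rightarrow>
    'o \<Rightarrow> ('p \<Rightarrow> 'a) \<Rightarrow> 'o \<Rightarrow> ('p \<Rightarrow> 'a) \<Rightarrow> 'a" where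
  "colimit_mediator J C c l c' l' =
     (THE h. h \<in> Arr C \<and> Dom C h = c \<and> Cod C h = c' \<and> (\<forall>j\<in>Obj J. Comp C h (l j) = l' j))"

lemma colimit_mediator:
  assumes "colimit J C Fo Fa c l" "cocone J C Fo Fa c' l'"
  defines "h \<equiv> colimit_mediator J C c l c' l'"
  shows "h \<in> Arr C" "Dom C h = c" "Cod C h = c'" "\<And>j. j \<in> Obj J \<Longrightarrow> Comp C h (l j) = l' j"
proof -
  have "\<exists>!h. h \<in> Arr C \<and> Dom C h = c \<and> Cod C h = c' \<and> (\<forall>j\<in>Obj J. Comp C h (l j) = l' j)"
    using assms(1,2) unfolding colimit_def by blast
  from theI'[OF this] show "h \<in> Arr C" "Dom C h = c" "Cod C h = c'"
    "\<And>j. j \<in> Obj J \<Longrightarrow> Comp C h (l j) = l' j"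
    unfolding h_def colimit_mediator_def by blast+
qed

lemma colimit_mediator_unique:
  assumes "colimit J C Fo Fa c l" "cocone J C Fo Fa c' l'"
    and "h \<in> Arr C" "Dom C h = c" "Cod C h = c'" "\<forall>j\<in>Obj J. Comp C h (l j) = l' j"
  shows "h = colimit_mediator J C c l c' l'"
proof -
  have "\<exists>!h. h \<in> Arr C \<and> Dom C h = c \<and> Cod C h = c' \<and> (\<forall>j\<in>Obj J. Comp C h (l j) = l' j)"
    using assms(1,2) unfolding colimit_def by blast
  thus ?thesis unfolding colimit_mediator_def using assms(3-6) by (simp add: the1_equality)
qed

section \<open>Diagrams indexed by graphs without composable edges\<close>

text \<open>In \<open>graph_cat\<close> the arrow \<open>2 * x\<close> is the identity of the vertex \<open>x\<close> and
  \<open>Suc (2 * e)\<close> is the edge \<open>e\<close>; composition is only ever with an identity.\<close>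

definition graph_cat :: "nat set \<Rightarrow> nat set \<Rightarrow> (nat \<Rightarrow> nat) \<Rightarrow> (nat \<Rightarrow> nat) \<Rightarrow> (nat, nat) cat" where
  "graph_cat V E s t =
     \<lparr>Obj = V, Arr = (\<lambda>x. 2 * x) ` V \<union> (\<lambda>e. Suc (2 * e)) ` E,
      Dom = (\<lambda>n. if even n then n div 2 else s (n div 2)),
      Cod = (\<lambda>n. if even n then n div 2 else t (n div 2)),
      Id = (\<lambda>x. 2 * x), Comp = (\<lambda>g f. if even g then f else g)\<rparr>"

definition bipartite_graph :: "nat set \<Rightarrow> nat set \<Rightarrow> (nat \<Rightarrow> nat) \<Rightarrow> (nat \<Rightarrow> nat) \<Rightarrow> bool" where
  "bipartite_graph V E s t \<longleftrightarrow>
     (\<forall>e\<in>E. s e \<in> V \<and> t e \<in> V) \<and> (\<forall>e\<in>E. \<forall>e'\<in>E. t e \<noteq> s e')"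

definition graph_rel :: "nat set \<Rightarrow> (nat \<Rightarrow> nat) \<Rightarrow> (nat \<Rightarrow> nat) \<Rightarrow> nat rel" where
  "graph_rel E s t = {(s e, t e) |e. e \<in> E}"

lemma graph_relI: "e \<in> E \<Longrightarrow> (s e, t e) \<in> graph_rel E s t"
  unfolding graph_rel_def by blast

definition is_graph_diagram :: "('o, 'a, 'm) cat_scheme \<Rightarrow> nat set \<Rightarrow> nat set \<Rightarrow>
    (nat \<Rightarrow> nat) \<Rightarrow> (nat \<Rightarrow> nat) \<Rightarrow> (nat \<Rightarrow> 'o) \<Rightarrow> (nat \<Rightarrow> 'a) \<Rightarrow> bool" where
  "is_graph_diagram C V E s t Fo Fe \<longleftrightarrow> (\<forall>x\<in>V. Fo x \<in> Obj C) \<and>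
     (\<forall>e\<in>E. Fe e \<in> Arr C \<and> Dom C (Fe e) = Fo (s e) \<and> Cod C (Fe e) = Fo (t e))"

definition graph_diagram :: "('o, 'a, 'm) cat_scheme \<Rightarrow> (nat \<Rightarrow> 'o) \<Rightarrow> (nat \<Rightarrow> 'a) \<Rightarrow> nat \<Rightarrow> 'a" where
  "graph_diagram C Fo Fe n = (if even n then Id C (Fo (n div 2)) else Fe (n div 2))"

lemma Obj_graph_cat [simp]: "Obj (graph_cat V E s t) = V"
  by (simp add: graph_cat_def)

lemma category_graph_cat:
  assumes "bipartite_graph V E s t"
  shows "category (graph_cat V E s t)"
proof -
  have edge: "s e \<in> V" "t e \<in> V" "\<And>e'. e' \<in> E \<Longrightarrow> t e \<noteq> s e'" if "e \<in> E" for e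
    using assms that unfolding bipartite_graph_def by blast+
  show ?thesis
    unfolding category_def graph_cat_def by (simp add: ball_Un edge)
qed

lemma finite_cat_graph_cat: "finite V \<Longrightarrow> finite E \<Longrightarrow> finite_cat (graph_cat V E s t)"
  by (simp add: finite_cat_def graph_cat_def)

lemma connected_cat_graph_cat:
  assumes "r \<in> V" and "\<forall>x\<in>V. (r, x) \<in> (graph_rel E s t \<union> (graph_rel E s t)\<inverse>)\<^sup>*"
  shows "connected_cat (graph_cat V E s t)"
proof -
  let ?G = "graph_cat V E s t"
  let ?Z = "{(Dom ?G u, Cod ?G u) |u. u \<in> Arr ?G} \<union> {(Cod ?G u, Dom ?G u) |u. u \<in> Arr ?G}"
  have "graph_rel E s t \<union> (graph_rel E s t)\<inverse> \<subseteq> ?Z"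
  proof
    fix z assume "z \<in> graph_rel E s t \<union> (graph_rel E s t)\<inverse>"
    then obtain e where e: "e \<in> E" "z = (s e, t e) \<or> z = (t e, s e)"
      unfolding graph_rel_def by blast
    have "(s e, t e) \<in> {(Dom ?G u, Cod ?G u) |u. u \<in> Arr ?G}"
      "(t e, s e) \<in> {(Cod ?G u, Dom ?G u) |u. u \<in> Arr ?G}"
      using e(1) unfolding mem_Collect_eq
      by (intro exI[of _ "Suc (2 * e)"]; simp add: graph_cat_def)+
    with e(2) show "z \<in> ?Z" by blast
  qed
  hence root: "(r, x) \<in> ?Z\<^sup>*" if "x \<in> V" for x
    using assms(2) that rtrancl_mono by blast
  have "sym (?Z\<^sup>*)" by (intro sym_rtrancl) (auto simp: sym_def)
  hence "(x, y) \<in> ?Z\<^sup>*" if "x \<in> V" "y \<in> V" for x y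
    using root[OF that(1)] root[OF that(2)] unfolding sym_def by (meson rtrancl_trans)
  thus ?thesis using assms(1) unfolding connected_cat_def by (auto simp: graph_cat_def)
qed

lemma is_functor_graph_diagram:
  assumes C: "category C" and G: "bipartite_graph V E s t" and F: "is_graph_diagram C V E s t Fo Fe"
  shows "is_functor (graph_cat V E s t) C Fo (graph_diagram C Fo Fe)"
proof -
  have edge: "s e \<in> V" "t e \<in> V" "\<And>e'. e' \<in> E \<Longrightarrow> t e \<noteq> s e'"
    "Fe e \<in> Arr C" "Dom C (Fe e) = Fo (s e)" "Cod C (Fe e) = Fo (t e)" if "e \<in> E" for e
    using G F that unfolding bipartite_graph_def is_graph_diagram_def by blast+
  have edge_id: "Comp C (Fe e) (Id C (Fo (s e))) = Fe e" "Comp C (Id C (Fo (t e))) (Fe e) = Fe e"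
    if "e \<in> E" for e
    using category_comp_id_right[OF C] category_comp_id_left[OF C] edge[OF that] by metis+
  have vertex: "Fo x \<in> Obj C" "Comp C (Id C (Fo x)) (Id C (Fo x)) = Id C (Fo x)" if "x \<in> V" for x
    using F that category_id[OF C] category_comp_id_right[OF C]
    unfolding is_graph_diagram_def by metis+
  show ?thesis
    unfolding is_functor_def graph_cat_def graph_diagram_def
    by (simp add: ball_Un edge edge_id vertex category_id[OF C])
qed

lemma cocone_graph_diagram_iff:
  assumes C: "category C" and F: "is_graph_diagram C V E s t Fo Fe"
  shows "cocone (graph_cat V E s t) C Fo (graph_diagram C Fo Fe) c l \<longleftrightarrow>
    c \<in> Obj C \<and> (\<forall>x\<in>V. l x \<in> Arr C \<and> Dom C (l x) = Fo x \<and> Cod C (l x) = c) \<and>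
    (\<forall>e\<in>E. Comp C (l (t e)) (Fe e) = l (s e))"
proof -
  have "Comp C (l x) (Id C (Fo x)) = l x" if "l x \<in> Arr C" "Dom C (l x) = Fo x" for x
    using category_comp_id_right[OF C that(1)] that(2) by simp
  thus ?thesis
    unfolding cocone_def graph_cat_def graph_diagram_def by (auto simp: ball_Un)
qed

text \<open>Every source vertex maps along its edge into a target vertex, so a map out of a cocone is
  determined by its composites with the legs at the vertices that are not sources.\<close>

lemma graph_cocone_eqI:
  assumes C: "category C" and G: "bipartite_graph V E s t" and F: "is_graph_diagram C V E s t Fo Fe"
    and l: "cocone (graph_cat V E s t) C Fo (graph_diagram C Fo Fe) c l"
    and l': "cocone (graph_cat V E s t) C Fo (graph_diagram C Fo Fe) c' l'"
    and h: "h \<in> Arr C" "Dom C h = c"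
    and targets: "\<forall>x\<in>V - s ` E. Comp C h (l x) = l' x"
    and x: "x \<in> V"
  shows "Comp C h (l x) = l' x"
proof (cases "x \<in> s ` E")
  case True
  then obtain e where e: "e \<in> E" "x = s e" by blast
  have te: "t e \<in> V - s ` E" using G e(1) unfolding bipartite_graph_def by force
  hence h_te: "Comp C h (l (t e)) = l' (t e)" using targets by blast
  have Fe: "Fe e \<in> Arr C" "Cod C (Fe e) = Fo (t e)"
    using F e(1) unfolding is_graph_diagram_def by blast+
  have lte: "l (t e) \<in> Arr C" "Dom C (l (t e)) = Fo (t e)" "Cod C (l (t e)) = c"
    using l te unfolding cocone_graph_diagram_iff[OF C F] by blast+
  have "Comp C h (l x) = Comp C h (Comp C (l (t e)) (Fe e))"
    using l e unfolding cocone_graph_diagram_iff[OF C F] by simp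
  also have "\<dots> = Comp C (Comp C h (l (t e))) (Fe e)"
    using category_comp_assoc[OF C Fe(1) lte(1) h(1)] Fe(2) lte(2,3) h(2) by simp
  also have "\<dots> = l' x"
    using l' e h_te unfolding cocone_graph_diagram_iff[OF C F] by simp
  finally show ?thesis .
qed (use targets x in blast)

lemma graph_diagram_has_colimit:
  assumes "has_finite_connected_colimits C" "category C"
    and "bipartite_graph V E s t" "is_graph_diagram C V E s t Fo Fe" "finite V" "finite E"
    and "r \<in> V" "\<forall>x\<in>V. (r, x) \<in> (graph_rel E s t \<union> (graph_rel E s t)\<inverse>)\<^sup>*"
  shows "\<exists>c l. colimit (graph_cat V E s t) C Fo (graph_diagram C Fo Fe) c l"
proof -
  have "category (graph_cat V E s t)" "finite_cat (graph_cat V E s t)"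
    "connected_cat (graph_cat V E s t)"
    "is_functor (graph_cat V E s t) C Fo (graph_diagram C Fo Fe)"
    using assms category_graph_cat finite_cat_graph_cat connected_cat_graph_cat
      is_functor_graph_diagram by auto
  with assms(1) show ?thesis unfolding has_finite_connected_colimits_def by blast
qed

section \<open>Canonical representatives of generated equivalence classes\<close>

definition class_rep :: "'a::linorder rel \<Rightarrow> 'a \<Rightarrow> 'a" where
  "class_rep R u = Min ((R \<union> R\<inverse>)\<^sup>* `` {u})"

lemma zigzag_invariant:
  assumes "\<forall>(x, y)\<in>R. f x = f y" and "(u, v) \<in> (R \<union> R\<inverse>)\<^sup>*"
  shows "f u = f v"
  using assms(2) by induction (use assms(1) in auto)

lemma finite_zigzag_class: "finite R \<Longrightarrow> finite ((R \<union> R\<inverse>)\<^sup>* `` {u})"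
proof -
  assume "finite R"
  have "(R \<union> R\<inverse>)\<^sup>* `` {u} \<subseteq> insert u (Field R)"
  proof
    fix v assume "v \<in> (R \<union> R\<inverse>)\<^sup>* `` {u}"
    hence "(u, v) \<in> (R \<union> R\<inverse>)\<^sup>*" by simp
    thus "v \<in> insert u (Field R)" by induction (auto simp: Field_def)
  qed
  with \<open>finite R\<close> show ?thesis by (meson finite_Field finite_insert finite_subset)
qed

lemma class_rep_related: "finite R \<Longrightarrow> (u, class_rep R u) \<in> (R \<union> R\<inverse>)\<^sup>*"
  using Min_in[OF finite_zigzag_class] unfolding class_rep_def by blast

lemma class_rep_eq_iff:
  assumes "finite R"
  shows "class_rep R u = class_rep R v \<longleftrightarrow> (u, v) \<in> (R \<union> R\<inverse>)\<^sup>*"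
proof
  have sym: "sym ((R \<union> R\<inverse>)\<^sup>*)" by (simp add: sym_Un_converse sym_rtrancl)
  show "(u, v) \<in> (R \<union> R\<inverse>)\<^sup>*" if "class_rep R u = class_rep R v"
    using class_rep_related[OF assms, of u] class_rep_related[OF assms, of v] that sym
    unfolding sym_def by (metis rtrancl_trans)
  show "class_rep R u = class_rep R v" if "(u, v) \<in> (R \<union> R\<inverse>)\<^sup>*"
  proof -
    have "(R \<union> R\<inverse>)\<^sup>* `` {u} = (R \<union> R\<inverse>)\<^sup>* `` {v}"
      using that sym unfolding sym_def by (blast intro: rtrancl_trans)
    thus ?thesis by (simp add: class_rep_def)
  qed
qed

lemma class_rep_idem [simp]: "finite R \<Longrightarrow> class_rep R (class_rep R u) = class_rep R u"
  using class_rep_eq_iff class_rep_related by metis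

lemma class_rep_in:
  assumes "finite R" "R \<subseteq> U \<times> U" "u \<in> U"
  shows "class_rep R u \<in> U"
  using class_rep_related[OF assms(1), of u] assms(3)
  by induction (use assms(2) in auto)

section \<open>Pushouts in the Grothendieck twist\<close>

lemma Tw_simps [simp]:
  "Obj (Tw D) = tw_objs D" "Arr (Tw D) = tw_arrs D"
  "Dom (Tw D) (X, Y, f, F) = X" "Cod (Tw D) (X, Y, f, F) = Y"
  "Comp (Tw D) (Y, Z, g, G) (X, Y', f, F) =
     (X, Z, \<lambda>i\<in>fst X. g (f i), \<lambda>i\<in>fst X. Comp D (G (f i)) (F i))"
  by (simp_all add: Tw_def)

lemma restrict_eq_extensional_iff:
  "f \<in> extensional A \<Longrightarrow> restrict g A = f \<longleftrightarrow> (\<forall>x\<in>A. g x = f x)"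
  by (metis extensional_restrict restrict_apply' restrict_ext)

lemma Tw_comp_eq_iff:
  assumes "((I, a), Z', h, H) \<in> tw_arrs D"
  shows "Comp (Tw D) (Y, Z, g, Gg) ((I, a), Y', f, Ff) = ((I, a), Z', h, H) \<longleftrightarrow>
    Z = Z' \<and> (\<forall>i\<in>I. g (f i) = h i \<and> Comp D (Gg (f i)) (Ff i) = H i)"
  using assms by (auto simp: tw_arrs_def restrict_eq_extensional_iff)

lemma tw_arr_exhaust:
  obtains I a J b f F where "h = ((I, a), (J, b), f, F)"
  by (metis prod.exhaust)

locale tw_span =
  fixes D :: "('o, 'a) cat"
    and I :: "nat set" and a :: "nat \<Rightarrow> 'o"
    and J :: "nat set" and b :: "nat \<Rightarrow> 'o"
    and K :: "nat set" and c :: "nat \<Rightarrow> 'o"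
    and \<phi> :: "nat \<Rightarrow> nat" and F :: "nat \<Rightarrow> 'a"
    and \<psi> :: "nat \<Rightarrow> nat" and G :: "nat \<Rightarrow> 'a"
  assumes category: "category D"
    and colimits: "has_finite_connected_colimits D"
    and f_arr: "((I, a), (J, b), \<phi>, F) \<in> tw_arrs D"
    and g_arr: "((I, a), (K, c), \<psi>, G) \<in> tw_arrs D"
begin

lemma finite_I: "finite I" and finite_J: "finite J" and finite_K: "finite K"
  using f_arr g_arr by (auto simp: tw_arrs_def tw_objs_def)

lemma obj_a: "i \<in> I \<Longrightarrow> a i \<in> Obj D"
  and obj_b: "j \<in> J \<Longrightarrow> b j \<in> Obj D"
  and obj_c: "k \<in> K \<Longrightarrow> c k \<in> Obj D"
  using f_arr g_arr by (auto simp: tw_arrs_def tw_objs_def)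

lemma f_component:
  "i \<in> I \<Longrightarrow> \<phi> i \<in> J \<and> F i \<in> Arr D \<and> Dom D (F i) = a i \<and> Cod D (F i) = b (\<phi> i)"
  using f_arr by (auto simp: tw_arrs_def)

lemma g_component:
  "i \<in> I \<Longrightarrow> \<psi> i \<in> K \<and> G i \<in> Arr D \<and> Dom D (G i) = a i \<and> Cod D (G i) = c (\<psi> i)"
  using g_arr by (auto simp: tw_arrs_def)

text \<open>The disjoint union of \<open>J\<close> and \<open>K\<close> is encoded as \<open>U\<close> via \<open>j \<mapsto> 2 * j\<close> and
  \<open>k \<mapsto> 2 * k + 1\<close>; the index set of the pushout is its quotient by the equivalence relation
  generated by \<open>\<phi> i \<sim> \<psi> i\<close>, each class being represented by its least element.\<close>

definition U :: "nat set" where "U = (\<lambda>j. 2 * j) ` J \<union> (\<lambda>k. Suc (2 * k)) ` K"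

definition R :: "nat rel" where "R = {(2 * \<phi> i, Suc (2 * \<psi> i)) |i. i \<in> I}"

abbreviation cls :: "nat \<Rightarrow> nat" where "cls \<equiv> class_rep R"

definition P :: "nat set" where "P = cls ` U"

definition ob :: "nat \<Rightarrow> 'o" where "ob u = (if even u then b (u div 2) else c (u div 2))"

lemma U_cases:
  assumes "u \<in> U"
  obtains j where "j \<in> J" "u = 2 * j" | k where "k \<in> K" "u = Suc (2 * k)"
  using assms unfolding U_def by blast

lemma finite_R: "finite R"
  unfolding R_def using finite_I by simp

lemma R_subset: "R \<subseteq> U \<times> U"
  unfolding R_def U_def using f_component g_component by blast

lemma cls_in_U: "u \<in> U \<Longrightarrow> cls u \<in> U"
  using class_rep_in[OF finite_R R_subset] .

lemma cls_span_legs: "i \<in> I \<Longrightarrow> cls (Suc (2 * \<psi> i)) = cls (2 * \<phi> i)"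
  using class_rep_eq_iff[OF finite_R] unfolding R_def by blast

lemma P_D: "p \<in> P \<Longrightarrow> p \<in> U \<and> cls p = p"
  unfolding P_def using cls_in_U finite_R by auto

lemma ob_in_Obj: "u \<in> U \<Longrightarrow> ob u \<in> Obj D"
  by (erule U_cases) (simp_all add: ob_def obj_b obj_c)

text \<open>The diagram of a class \<open>p\<close> has a vertex \<open>2 * u\<close> for each \<open>u \<in> U\<close> in the class and a
  vertex \<open>2 * i + 1\<close> for each \<open>i \<in> I\<close> lying over it; its edges \<open>2 * i\<close> and \<open>2 * i + 1\<close>
  carry \<open>F i\<close> and \<open>G i\<close>.\<close>

definition over :: "nat \<Rightarrow> nat set" where "over p = {i \<in> I. cls (2 * \<phi> i) = p}"

definition vertices :: "nat \<Rightarrow> nat set" where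
  "vertices p = (\<lambda>u. 2 * u) ` {u \<in> U. cls u = p} \<union> (\<lambda>i. Suc (2 * i)) ` over p"

definition edges :: "nat \<Rightarrow> nat set" where
  "edges p = (\<lambda>i. 2 * i) ` over p \<union> (\<lambda>i. Suc (2 * i)) ` over p"

definition edge_head :: "nat \<Rightarrow> nat" where
  "edge_head e = (if even e then 2 * \<phi> (e div 2) else Suc (2 * \<psi> (e div 2)))"

definition edge_src :: "nat \<Rightarrow> nat" where "edge_src e = Suc (2 * (e div 2))"

definition edge_tgt :: "nat \<Rightarrow> nat" where "edge_tgt e = 2 * edge_head e"

definition diag_obj :: "nat \<Rightarrow> 'o" where
  "diag_obj x = (if even x then ob (x div 2) else a (x div 2))"

definition diag_edge :: "nat \<Rightarrow> 'a" where
  "diag_edge e = (if even e then F (e div 2) else G (e div 2))"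

abbreviation diag_cat :: "nat \<Rightarrow> (nat, nat) cat" where
  "diag_cat p \<equiv> graph_cat (vertices p) (edges p) edge_src edge_tgt"

abbreviation diag_arr :: "nat \<Rightarrow> 'a" where "diag_arr \<equiv> graph_diagram D diag_obj diag_edge"

lemma edges_cases:
  assumes "e \<in> edges p"
  obtains i where "i \<in> over p" "e = 2 * i" | i where "i \<in> over p" "e = Suc (2 * i)"
  using assms unfolding edges_def by blast

lemma over_I: "i \<in> over p \<Longrightarrow> i \<in> I \<and> cls (2 * \<phi> i) = p"
  by (simp add: over_def)

lemma edge_head_in_class: "e \<in> edges p \<Longrightarrow> edge_head e \<in> U \<and> cls (edge_head e) = p"
  by (erule edges_cases)
    (auto simp: edge_head_def U_def over_def cls_span_legs f_component g_component)

lemma bipartite_diag: "bipartite_graph (vertices p) (edges p) edge_src edge_tgt"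
  unfolding bipartite_graph_def
proof (intro conjI ballI)
  fix e assume e: "e \<in> edges p"
  show "edge_src e \<in> vertices p"
    using e by (cases rule: edges_cases) (auto simp: edge_src_def vertices_def)
  show "edge_tgt e \<in> vertices p"
    using edge_head_in_class[OF e] by (auto simp: edge_tgt_def vertices_def)
  show "edge_tgt e \<noteq> edge_src e'" for e'
    by (simp add: edge_tgt_def edge_src_def) presburger
qed

lemma is_graph_diagram_diag:
  "is_graph_diagram D (vertices p) (edges p) edge_src edge_tgt diag_obj diag_edge"
proof -
  have "diag_obj x \<in> Obj D" if "x \<in> vertices p" for x
    using that by (auto simp: vertices_def diag_obj_def ob_in_Obj over_def obj_a)
  moreover have "diag_edge e \<in> Arr D \<and> Dom D (diag_edge e) = diag_obj (edge_src e) \<and>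
      Cod D (diag_edge e) = diag_obj (edge_tgt e)" if "e \<in> edges p" for e
    using that by (cases rule: edges_cases)
      (auto simp: diag_edge_def diag_obj_def edge_src_def edge_tgt_def edge_head_def ob_def
        over_def f_component g_component)
  ultimately show ?thesis unfolding is_graph_diagram_def by blast
qed

lemma finite_diag: "finite (vertices p)" "finite (edges p)"
proof -
  have "finite (over p)" using finite_I by (simp add: over_def)
  moreover have "finite U" using finite_J finite_K by (simp add: U_def)
  ultimately show "finite (vertices p)" "finite (edges p)"
    by (simp_all add: vertices_def edges_def)
qed

abbreviation diag_rel :: "nat \<Rightarrow> nat rel" where
  "diag_rel p \<equiv>
     graph_rel (edges p) edge_src edge_tgt \<union> (graph_rel (edges p) edge_src edge_tgt)\<inverse>"

lemma edge_links:
  assumes "i \<in> over p"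
  shows "(edge_tgt (2 * i), Suc (2 * i)) \<in> diag_rel p"
    and "(Suc (2 * i), edge_tgt (2 * i)) \<in> diag_rel p"
    and "(edge_tgt (Suc (2 * i)), Suc (2 * i)) \<in> diag_rel p"
    and "(Suc (2 * i), edge_tgt (Suc (2 * i))) \<in> diag_rel p"
proof -
  have e: "2 * i \<in> edges p" "Suc (2 * i) \<in> edges p" using assms by (auto simp: edges_def)
  have src: "edge_src (2 * i) = Suc (2 * i)" "edge_src (Suc (2 * i)) = Suc (2 * i)"
    by (simp_all add: edge_src_def)
  from graph_relI[OF e(1), of edge_src edge_tgt] graph_relI[OF e(2), of edge_src edge_tgt]
  show "(edge_tgt (2 * i), Suc (2 * i)) \<in> diag_rel p"
    "(Suc (2 * i), edge_tgt (2 * i)) \<in> diag_rel p"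
    "(edge_tgt (Suc (2 * i)), Suc (2 * i)) \<in> diag_rel p"
    "(Suc (2 * i), edge_tgt (Suc (2 * i))) \<in> diag_rel p"
    unfolding src by blast+
qed

text \<open>A step \<open>\<phi> i \<sim> \<psi> i\<close> of the generated equivalence is the zigzag
  \<open>b (\<phi> i) \<leftarrow> a i \<rightarrow> c (\<psi> i)\<close> through the vertex of \<open>i\<close>.\<close>

lemma zigzag_lift:
  assumes "(x, y) \<in> (R \<union> R\<inverse>)\<^sup>*" "cls x = p"
  shows "(2 * x, 2 * y) \<in> (diag_rel p)\<^sup>*"
  using assms
proof (induction rule: rtrancl_induct)
  case (step y z)
  have "cls y = p" using step.hyps(1) step.prems class_rep_eq_iff[OF finite_R] by metis
  from step.hyps(2) obtain i where i: "i \<in> I"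
    and yz: "(y, z) = (2 * \<phi> i, Suc (2 * \<psi> i)) \<or> (z, y) = (2 * \<phi> i, Suc (2 * \<psi> i))"
    unfolding R_def by blast
  hence "i \<in> over p" using \<open>cls y = p\<close> cls_span_legs by (auto simp: over_def)
  hence "(2 * y, Suc (2 * i)) \<in> diag_rel p \<and> (Suc (2 * i), 2 * z) \<in> diag_rel p"
    using edge_links[OF \<open>i \<in> over p\<close>] yz by (auto simp: edge_tgt_def edge_head_def)
  hence "(2 * y, 2 * z) \<in> (diag_rel p)\<^sup>*"
    by (metis r_into_rtrancl rtrancl.rtrancl_into_rtrancl)
  with step.IH step.prems show ?case by simp
qed simp

lemma diag_connected:
  assumes "p \<in> P" "x \<in> vertices p"
  shows "(2 * p, x) \<in> (diag_rel p)\<^sup>*"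
  using assms(2) unfolding vertices_def
proof (elim UnE imageE)
  have cp: "cls p = p" using P_D[OF assms(1)] by simp
  show "(2 * p, x) \<in> (diag_rel p)\<^sup>*" if "x = 2 * u" "u \<in> {u \<in> U. cls u = p}" for u
    using zigzag_lift[OF _ cp] class_rep_eq_iff[OF finite_R, of p u] that cp by simp
  show "(2 * p, x) \<in> (diag_rel p)\<^sup>*" if "x = Suc (2 * i)" "i \<in> over p" for i
  proof -
    have "(p, 2 * \<phi> i) \<in> (R \<union> R\<inverse>)\<^sup>*"
      using class_rep_eq_iff[OF finite_R, of p "2 * \<phi> i"] over_I[OF that(2)] cp by simp
    from zigzag_lift[OF this cp] have "(2 * p, edge_tgt (2 * i)) \<in> (diag_rel p)\<^sup>*"
      by (simp add: edge_tgt_def edge_head_def)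
    with edge_links(1)[OF that(2)] that(1) show ?thesis
      by (simp add: rtrancl.rtrancl_into_rtrancl)
  qed
qed

definition colim :: "nat \<Rightarrow> 'o \<times> (nat \<Rightarrow> 'a)" where
  "colim p = (SOME wL. colimit (diag_cat p) D diag_obj diag_arr (fst wL) (snd wL))"

definition apex :: "nat \<Rightarrow> 'o" where "apex p = fst (colim p)"

definition coproj :: "nat \<Rightarrow> nat \<Rightarrow> 'a" where "coproj p = snd (colim p)"

lemma colimit_diag: "p \<in> P \<Longrightarrow> colimit (diag_cat p) D diag_obj diag_arr (apex p) (coproj p)"
proof -
  assume "p \<in> P"
  hence "2 * p \<in> vertices p" using P_D by (auto simp: vertices_def)
  with \<open>p \<in> P\<close> have "\<exists>w L. colimit (diag_cat p) D diag_obj diag_arr w L"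
    by (intro graph_diagram_has_colimit[OF colimits category bipartite_diag
          is_graph_diagram_diag finite_diag]) (auto intro: diag_connected)
  hence "\<exists>wL. colimit (diag_cat p) D diag_obj diag_arr (fst wL) (snd wL)" by simp
  hence "colimit (diag_cat p) D diag_obj diag_arr (fst (colim p)) (snd (colim p))"
    unfolding colim_def by (rule someI_ex)
  thus ?thesis by (simp add: apex_def coproj_def)
qed

lemma coproj_cocone:
  assumes "p \<in> P"
  shows "x \<in> vertices p \<Longrightarrow>
      coproj p x \<in> Arr D \<and> Dom D (coproj p x) = diag_obj x \<and> Cod D (coproj p x) = apex p"
    and "e \<in> edges p \<Longrightarrow> Comp D (coproj p (edge_tgt e)) (diag_edge e) = coproj p (edge_src e)"
  using colimit_diag[OF assms]
  unfolding colimit_def cocone_graph_diagram_iff[OF category is_graph_diagram_diag] by blast+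

definition incl :: "nat \<Rightarrow> 'a" where "incl u = coproj (cls u) (2 * u)"

lemma incl_arr:
  "u \<in> U \<Longrightarrow> incl u \<in> Arr D \<and> Dom D (incl u) = ob u \<and> Cod D (incl u) = apex (cls u)"
  using coproj_cocone(1)[of "cls u" "2 * u"] by (simp add: incl_def P_def vertices_def diag_obj_def)

lemma incl_square:
  "i \<in> I \<Longrightarrow> Comp D (incl (2 * \<phi> i)) (F i) = Comp D (incl (Suc (2 * \<psi> i))) (G i)"
  \<comment> \<open>both sides are the leg at the vertex of \<open>i\<close>\<close>
proof -
  assume i: "i \<in> I"
  define p where "p = cls (2 * \<phi> i)"
  have p: "p \<in> P" unfolding p_def P_def U_def using i f_component by blast
  have e: "2 * i \<in> edges p" "Suc (2 * i) \<in> edges p"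
    using i by (auto simp: edges_def over_def p_def)
  have "Comp D (coproj p (edge_tgt (2 * i))) (F i) = coproj p (Suc (2 * i))"
    "Comp D (coproj p (edge_tgt (Suc (2 * i)))) (G i) = coproj p (Suc (2 * i))"
    using coproj_cocone(2)[OF p e(1)] coproj_cocone(2)[OF p e(2)]
    by (simp_all add: diag_edge_def edge_src_def)
  thus ?thesis
    using cls_span_legs[OF i] by (simp add: incl_def edge_tgt_def edge_head_def p_def)
qed

definition pushout_obj :: "'o tw_obj" where "pushout_obj = (P, restrict apex P)"

definition pushout_left :: "('o, 'a) tw_arr" where
  "pushout_left = ((J, b), pushout_obj, \<lambda>j\<in>J. cls (2 * j), \<lambda>j\<in>J. incl (2 * j))"

definition pushout_right :: "('o, 'a) tw_arr" where
  "pushout_right =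
     ((K, c), pushout_obj, \<lambda>k\<in>K. cls (Suc (2 * k)), \<lambda>k\<in>K. incl (Suc (2 * k)))"

lemma pushout_obj_in_tw_objs: "pushout_obj \<in> tw_objs D"
proof -
  have "finite P" using finite_J finite_K by (simp add: P_def U_def)
  moreover have "apex p \<in> Obj D" if "p \<in> P" for p
    using colimit_diag[OF that] unfolding colimit_def cocone_def by blast
  ultimately show ?thesis by (simp add: pushout_obj_def tw_objs_def)
qed

lemma pushout_left_arr: "pushout_left \<in> tw_arrs D"
  and pushout_right_arr: "pushout_right \<in> tw_arrs D"
  using f_arr g_arr pushout_obj_in_tw_objs incl_arr
  by (auto simp: pushout_left_def pushout_right_def tw_arrs_def pushout_obj_def P_def U_def
      ob_def)

lemma commuting_square_pushout_legs:
  "commuting_square (Tw D) ((I, a), (J, b), \<phi>, F) ((I, a), (K, c), \<psi>, G)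
     pushout_left pushout_right"
  using pushout_left_arr pushout_right_arr f_component g_component incl_square cls_span_legs
  by (auto simp: commuting_square_def pushout_left_def pushout_right_def intro!: restrict_ext)

end

locale tw_cocone = tw_span D I a J b K c \<phi> F \<psi> G
  for D :: "('o, 'a) cat" and I a J b K c \<phi> F \<psi> G +
  fixes Q :: "nat set" and w :: "nat \<Rightarrow> 'o"
    and \<phi>' :: "nat \<Rightarrow> nat" and F' :: "nat \<Rightarrow> 'a"
    and \<psi>' :: "nat \<Rightarrow> nat" and G' :: "nat \<Rightarrow> 'a"
  assumes p'_arr: "((J, b), (Q, w), \<phi>', F') \<in> tw_arrs D"
    and q'_arr: "((K, c), (Q, w), \<psi>', G') \<in> tw_arrs D"
    and cocone_square: "i \<in> I \<Longrightarrow>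
      \<phi>' (\<phi> i) = \<psi>' (\<psi> i) \<and> Comp D (F' (\<phi> i)) (F i) = Comp D (G' (\<psi> i)) (G i)"
begin

definition \<tau> :: "nat \<Rightarrow> nat" where "\<tau> u = (if even u then \<phi>' (u div 2) else \<psi>' (u div 2))"

definition T :: "nat \<Rightarrow> 'a" where "T u = (if even u then F' (u div 2) else G' (u div 2))"

lemma \<tau>_T_simps [simp]:
  "\<tau> (2 * j) = \<phi>' j" "\<tau> (Suc (2 * k)) = \<psi>' k" "T (2 * j) = F' j" "T (Suc (2 * k)) = G' k"
  by (simp_all add: \<tau>_def T_def)

lemma T_arr:
  assumes "u \<in> U"
  shows "\<tau> u \<in> Q \<and> T u \<in> Arr D \<and> Dom D (T u) = ob u \<and> Cod D (T u) = w (\<tau> u)"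
  using assms
proof (cases rule: U_cases)
  case (1 j)
  with p'_arr show ?thesis by (simp add: tw_arrs_def \<tau>_def ob_def)
next
  case (2 k)
  with q'_arr show ?thesis by (simp add: tw_arrs_def \<tau>_def ob_def)
qed

lemma \<tau>_cls [simp]: "\<tau> (cls u) = \<tau> u"
proof -
  have "\<forall>(x, y)\<in>R. \<tau> x = \<tau> y" using cocone_square by (auto simp: R_def \<tau>_def)
  from zigzag_invariant[OF this class_rep_related[OF finite_R, of u]] show ?thesis by simp
qed

definition induced_leg :: "nat \<Rightarrow> 'a" where
  "induced_leg x = (if even x then T (x div 2) else Comp D (T (2 * \<phi> (x div 2))) (F (x div 2)))"

lemma induced_leg_simps [simp]:
  "induced_leg (2 * u) = T u" "induced_leg (edge_tgt e) = T (edge_head e)"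
  "induced_leg (Suc (2 * i)) = Comp D (T (2 * \<phi> i)) (F i)"
  by (simp_all add: induced_leg_def edge_tgt_def)

lemma cocone_induced:
  assumes "p \<in> P"
  shows "cocone (diag_cat p) D diag_obj diag_arr (w (\<tau> p)) induced_leg"
proof -
  have "w (\<tau> p) \<in> Obj D"
    using p'_arr T_arr P_D[OF assms] by (auto simp: tw_arrs_def tw_objs_def)
  moreover have "induced_leg x \<in> Arr D \<and> Dom D (induced_leg x) = diag_obj x \<and>
      Cod D (induced_leg x) = w (\<tau> p)" if x: "x \<in> vertices p" for x
  proof -
    consider u where "u \<in> U" "cls u = p" "x = 2 * u" | i where "i \<in> over p" "x = Suc (2 * i)"
      using x unfolding vertices_def by blast
    thus ?thesis
    proof cases
      case (1 u)
      thus ?thesis using T_arr[of u] by (auto simp: diag_obj_def)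
    next
      case (2 i)
      hence i: "i \<in> I" "cls (2 * \<phi> i) = p" by (simp_all add: over_def)
      have "2 * \<phi> i \<in> U" using i f_component by (simp add: U_def)
      hence T: "T (2 * \<phi> i) \<in> Arr D" "Dom D (T (2 * \<phi> i)) = b (\<phi> i)"
        "Cod D (T (2 * \<phi> i)) = w (\<tau> p)"
        using T_arr[of "2 * \<phi> i"] \<tau>_cls[of "2 * \<phi> i"] i(2) by (simp_all add: ob_def)
      have Fi: "F i \<in> Arr D" "Dom D (F i) = a i" "Cod D (F i) = b (\<phi> i)"
        using f_component[OF i(1)] by simp_all
      show ?thesis
        using category_comp[OF category Fi(1) T(1)] Fi(2,3) T(2,3) 2(2)
        by (simp add: diag_obj_def)
    qed
  qed
  moreover have "Comp D (induced_leg (edge_tgt e)) (diag_edge e) = induced_leg (edge_src e)"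
    if "e \<in> edges p" for e
    using that by (cases rule: edges_cases)
      (simp_all add: edge_head_def edge_src_def diag_edge_def over_def cocone_square)
  ultimately show ?thesis
    unfolding cocone_graph_diagram_iff[OF category is_graph_diagram_diag] by blast
qed

definition class_mediator :: "nat \<Rightarrow> 'a" where
  "class_mediator p = colimit_mediator (diag_cat p) D (apex p) (coproj p) (w (\<tau> p)) induced_leg"

lemma class_mediator_arr: "p \<in> P \<Longrightarrow>
    class_mediator p \<in> Arr D \<and> Dom D (class_mediator p) = apex p \<and>
    Cod D (class_mediator p) = w (\<tau> p)"
  using colimit_mediator[OF colimit_diag cocone_induced] by (simp add: class_mediator_def)

lemma class_mediator_incl: "u \<in> U \<Longrightarrow> Comp D (class_mediator (cls u)) (incl u) = T u"
proof -
  assume u: "u \<in> U"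
  hence "cls u \<in> P" "2 * u \<in> vertices (cls u)" by (auto simp: P_def vertices_def)
  from colimit_mediator(4)[OF colimit_diag[OF this(1)] cocone_induced[OF this(1)]] this(2)
  show ?thesis by (simp add: class_mediator_def incl_def)
qed

definition mediator :: "('o, 'a) tw_arr" where
  "mediator = (pushout_obj, (Q, w), \<lambda>p\<in>P. \<tau> p, \<lambda>p\<in>P. class_mediator p)"

lemma mediator_arr: "mediator \<in> tw_arrs D"
  using pushout_obj_in_tw_objs p'_arr class_mediator_arr T_arr P_D
  by (auto simp: mediator_def tw_arrs_def pushout_obj_def)

lemma mediator_left: "Comp (Tw D) mediator pushout_left = ((J, b), (Q, w), \<phi>', F')"
  and mediator_right: "Comp (Tw D) mediator pushout_right = ((K, c), (Q, w), \<psi>', G')"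
  unfolding mediator_def pushout_left_def pushout_right_def pushout_obj_def
    Tw_comp_eq_iff[OF p'_arr] Tw_comp_eq_iff[OF q'_arr]
  using class_mediator_incl by (auto simp: P_def U_def)

lemma mediator_unique:
  assumes h: "h \<in> tw_arrs D" "Dom (Tw D) h = pushout_obj" "Cod (Tw D) h = (Q, w)"
    and hp: "Comp (Tw D) h pushout_left = ((J, b), (Q, w), \<phi>', F')"
    and hq: "Comp (Tw D) h pushout_right = ((K, c), (Q, w), \<psi>', G')"
  shows "h = mediator"
proof -
  obtain \<theta> \<Theta> where h_def: "h = (pushout_obj, (Q, w), \<theta>, \<Theta>)" using h(2,3) by (cases h) auto
  have on_U: "\<theta> (cls u) = \<tau> u \<and> Comp D (\<Theta> (cls u)) (incl u) = T u" if "u \<in> U" for u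
    using that hp hq
    unfolding h_def pushout_left_def pushout_right_def
      Tw_comp_eq_iff[OF p'_arr] Tw_comp_eq_iff[OF q'_arr]
    by (elim U_cases) auto
  have h_comp: "\<theta> p \<in> Q \<and> \<Theta> p \<in> Arr D \<and> Dom D (\<Theta> p) = apex p \<and> Cod D (\<Theta> p) = w (\<theta> p)"
    if "p \<in> P" for p
    using h(1) that unfolding h_def pushout_obj_def tw_arrs_def by auto
  have \<theta>_eq: "\<theta> p = \<tau> p" if "p \<in> P" for p
    using on_U P_D[OF that] by metis
  moreover have "\<Theta> p = class_mediator p" if p: "p \<in> P" for p
  proof -
    have targets: "Comp D (\<Theta> p) (coproj p x) = induced_leg x"
      if "x \<in> vertices p - edge_src ` edges p" for x
    proof -
      have "Suc (2 * i) = edge_src (2 * i)" for i by (simp add: edge_src_def)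
      with that obtain u where "u \<in> U" "cls u = p" "x = 2 * u"
        unfolding vertices_def edges_def by blast
      thus ?thesis using on_U[of u] by (simp add: incl_def)
    qed
    have l: "cocone (diag_cat p) D diag_obj diag_arr (apex p) (coproj p)"
      using colimit_diag[OF p] unfolding colimit_def by blast
    have "\<forall>x\<in>vertices p. Comp D (\<Theta> p) (coproj p x) = induced_leg x"
      using graph_cocone_eqI[OF category bipartite_diag is_graph_diagram_diag l
          cocone_induced[OF p]] h_comp[OF p] targets by blast
    with h_comp[OF p] \<theta>_eq[OF p] show ?thesis
      unfolding class_mediator_def
      by (intro colimit_mediator_unique[OF colimit_diag[OF p] cocone_induced[OF p]]) simp_all
  qed
  moreover have "\<theta> \<in> extensional P" "\<Theta> \<in> extensional P"
    using h(1) unfolding h_def pushout_obj_def tw_arrs_def by auto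
  ultimately show ?thesis
    unfolding h_def mediator_def by (auto intro!: extensionalityI[of _ P])
qed

end

lemma (in tw_span) is_pushout_pushout_legs:
  "is_pushout (Tw D) ((I, a), (J, b), \<phi>, F) ((I, a), (K, c), \<psi>, G) pushout_left pushout_right"
  unfolding is_pushout_def
proof (intro conjI allI impI)
  show "commuting_square (Tw D) ((I, a), (J, b), \<phi>, F) ((I, a), (K, c), \<psi>, G)
      pushout_left pushout_right"
    by (rule commuting_square_pushout_legs)
  fix p' q'
  assume sq: "commuting_square (Tw D) ((I, a), (J, b), \<phi>, F) ((I, a), (K, c), \<psi>, G) p' q'"
  obtain J' b' Q w \<phi>' F' where p': "p' = ((J', b'), (Q, w), \<phi>', F')" by (rule tw_arr_exhaust)
  obtain K' c' Q' w' \<psi>' G' where q': "q' = ((K', c'), (Q', w'), \<psi>', G')" by (rule tw_arr_exhaust)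
  have ends: "(J', b') = (J, b)" "(K', c') = (K, c)" "(Q', w') = (Q, w)"
    using sq by (simp_all add: commuting_square_def p' q')
  interpret tw_cocone D I a J b K c \<phi> F \<psi> G Q w \<phi>' F' \<psi>' G'
  proof
    show "((J, b), (Q, w), \<phi>', F') \<in> tw_arrs D" "((K, c), (Q, w), \<psi>', G') \<in> tw_arrs D"
      using sq ends by (simp_all add: commuting_square_def p' q')
    fix i assume "i \<in> I"
    with sq ends show "\<phi>' (\<phi> i) = \<psi>' (\<psi> i) \<and> Comp D (F' (\<phi> i)) (F i) = Comp D (G' (\<psi> i)) (G i)"
      by (auto simp: commuting_square_def p' q' fun_eq_iff dest!: spec[of _ i])
  qed
  show "\<exists>!h. h \<in> Arr (Tw D) \<and> Dom (Tw D) h = Cod (Tw D) pushout_left \<and>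
      Cod (Tw D) h = Cod (Tw D) p' \<and> Comp (Tw D) h pushout_left = p' \<and>
      Comp (Tw D) h pushout_right = q'" (is "\<exists>!h. ?factors h")
  proof (rule ex1I[of ?factors mediator])
    show "?factors mediator"
      using mediator_arr mediator_left mediator_right ends
      by (simp add: mediator_def pushout_left_def p' q')
    show "h = mediator" if "?factors h" for h
      using that ends by (intro mediator_unique) (simp_all add: pushout_left_def p' q')
  qed
qed

theorem mainTheorem5:
  fixes D :: "('o, 'a) cat"
  assumes "category D"
    and "has_finite_connected_colimits D"
  shows "has_pushouts (Tw D)"
  unfolding has_pushouts_iff
proof (intro ballI impI)
  fix f g assume f: "f \<in> Arr (Tw D)" and g: "g \<in> Arr (Tw D)" and "Dom (Tw D) f = Dom (Tw D) g"
  obtain I a J b \<phi> F where f_def: "f = ((I, a), (J, b), \<phi>, F)" by (rule tw_arr_exhaust)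
  obtain I' a' K c \<psi> G where g_def: "g = ((I', a'), (K, c), \<psi>, G)" by (rule tw_arr_exhaust)
  have X: "(I', a') = (I, a)" using \<open>Dom (Tw D) f = Dom (Tw D) g\<close> by (simp add: f_def g_def)
  interpret tw_span D I a J b K c \<phi> F \<psi> G
    using assms f g X by unfold_locales (simp_all add: f_def g_def)
  show "\<exists>p q. is_pushout (Tw D) f g p q"
    using is_pushout_pushout_legs unfolding f_def g_def X by blast
qed

end
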